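(* Let $(\Omega,\mathcal{F},\mathbb{P})$ be a nonatomic probability space and $(\Phi,\Psi)$ an Orlicz pair as in the context. For every $X\in L^\Phi$ there exists a sequence $(\pi_n)\subset\Pi$ such that $\mathbb{E}[X|\pi_n]$ order converges to $X$ in $L^\Phi$; that is, $\mathbb{E}[X|\pi_n]\to X$ a.s. and there is $Z\in L^\Phi$ with $|\mathbb{E}[X|\pi_n]|\le Z$ for all $n$.
   Context: $(\Omega,\mathcal{F},\mathbb{P})$ is a nonatomic probability space. An Orlicz function is a convex, increasing $\Phi:[0,\infty)\to[0,\infty)$ with $\Phi(0)=0$; its conjugate is $\Psi(s)=\sup_{t\ge0}(ts-\Phi(t))$. Standing assumption: $\Phi(t)>0$ for $t>0$ and $\lim_{t\to\infty}\Phi(t)/t=\infty$. $L^\Phi$ is the space of random variables $X$ (mod a.s. equality) with $\|X\|_\Phi:=\inf\{\lambda>0:\mathbb{E}[\Phi(|X|/\lambda)]\le 1\}<\infty$. $\Pi$ denotes the set of all finite measurable partitions of $\Omega$ whose members all have nonzero probability; $\mathbb{E}[X|\pi]:=\mathbb{E}[X|\sigma(\pi)]$. For sequences in $L^\Phi$, order convergence $X_n\to X$ is equivalent to a.s. convergence together with domination $|X_n|\le Z$ for some $Z\in L^\Phi$. *)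

theory Defs
  imports "HOL-Probability.Probability"
begin

definition nonatomic :: "'a measure \<Rightarrow> bool" where
  "nonatomic M \<longleftrightarrow> (\<forall>A\<in>sets M. measure M A > 0 \<longrightarrow>
      (\<exists>B\<in>sets M. B \<subseteq> A \<and> 0 < measure M B \<and> measure M B < measure M A))"

definition orlicz_function :: "(real \<Rightarrow> real) \<Rightarrow> bool" where
  "orlicz_function \<Phi> \<longleftrightarrow>
     convex_on {0..} \<Phi> \<and> mono_on {0..} \<Phi> \<and> \<Phi> 0 = 0 \<and>
     (\<forall>t>0. \<Phi> t > 0) \<and> filterlim (\<lambda>t. \<Phi> t / t) at_top at_top"

text \<open>Membership in the Orlicz space: X measurable and the Luxemburg norm
inf{\<lambda>>0. E[Phi(|X|/\<lambda>)] \<le> 1} is finite, i.e. some \<lambda>>0 is admissible.\<close>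
definition in_orlicz :: "'a measure \<Rightarrow> (real \<Rightarrow> real) \<Rightarrow> ('a \<Rightarrow> real) \<Rightarrow> bool" where
  "in_orlicz M \<Phi> X \<longleftrightarrow> X \<in> borel_measurable M \<and>
     (\<exists>c>0. (\<integral>\<^sup>+ \<omega>. ennreal (\<Phi> (\<bar>X \<omega>\<bar> / c)) \<partial>M) \<le> 1)"

definition fin_partitions :: "'a measure \<Rightarrow> 'a set set set" where
  "fin_partitions M = {P. finite P \<and> P \<subseteq> sets M \<and> (\<forall>A\<in>P. measure M A > 0) \<and>
      disjoint P \<and> \<Union>P = space M}"

definition cond_exp_part :: "'a measure \<Rightarrow> 'a set set \<Rightarrow> ('a \<Rightarrow> real) \<Rightarrow> 'a \<Rightarrow> real" where
  "cond_exp_part M P X = real_cond_exp M (sigma (space M) P) X"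

end

theory Submission
  imports Defs
begin

text \<open>
  Fix \<open>c > 0\<close> with \<open>E[\<Phi>(|X|/c)] \<le> 1\<close> and choose cutoffs \<open>\<kappa> n > n\<close> so large that
  \<open>E[\<Phi>(|X|/c); |X| \<ge> \<kappa> n] \<le> 2^-(n+1)\<close>. The partition \<open>\<pi> n\<close> cuts \<open>{|X| < \<kappa> n}\<close> into the
  dyadic level sets of \<open>\<lfloor>2^n X\<rfloor>\<close> and keeps the tail \<open>{|X| \<ge> \<kappa> n}\<close> as one cell (null cells
  are merged into a non-null one). On the dyadic cells \<open>E[X|\<pi> n]\<close> is within \<open>2^-n\<close> of \<open>X\<close>, which
  gives a.s. convergence and the bound \<open>|X| + 1\<close>. On the tail cell \<open>E[X|\<pi> n]\<close> is the tail average
  \<open>a n\<close>, and Jensen gives \<open>\<Phi>(|a n|/c) P(|X| \<ge> \<kappa> n) \<le> 2^-(n+1)\<close>; hence the envelope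
  \<open>W = sup n |a n| 1{|X| \<ge> \<kappa> n}\<close> satisfies \<open>E[\<Phi>(W/c)] \<le> \<Sum> 2^-(n+1) = 1\<close>, and
  \<open>Z = |X| + 1 + W\<close> is a dominating function in \<open>L^\<Phi>\<close>.
\<close>

lemma set_integral_disjoint_Union:
  fixes f :: "'a \<Rightarrow> 'b::{banach, second_countable_topology}"
  assumes fin: "finite Q" and sets: "Q \<subseteq> sets M" and disj: "disjoint Q" and f: "integrable M f"
  shows "(\<integral>x\<in>\<Union>Q. f x \<partial>M) = (\<Sum>A\<in>Q. \<integral>x\<in>A. f x \<partial>M)"
proof -
  have "(\<integral>x\<in>(\<Union>A\<in>Q. A). f x \<partial>M) = (\<Sum>A\<in>Q. \<integral>x\<in>A. f x \<partial>M)"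
  proof (rule set_integral_finite_UN_AE)
    fix A B assume A: "A \<in> Q" and B: "B \<in> Q"
    show "AE x in M. x \<in> A \<and> x \<in> B \<longrightarrow> A = B"
      using disjointD[OF disj A B] by (intro AE_I2) blast
    show "A \<in> sets M" using A sets by blast
    then show "set_integrable M A f"
      unfolding set_integrable_def using f by (rule integrable_mult_indicator)
  qed (rule fin)
  then show ?thesis by simp
qed

lemma set_average_null_extension:
  fixes X :: "'a \<Rightarrow> real"
  assumes "A \<subseteq> B" "A \<in> sets M" "B \<in> sets M" "B - A \<in> null_sets M" and X: "integrable M X"
  shows "(\<integral>x\<in>B. X x \<partial>M) / measure M B = (\<integral>x\<in>A. X x \<partial>M) / measure M A"
proof -
  have "B = A \<union> (B - A)" using assms(1) by blast
  then have "measure M B = measure M A" using assms(2,4) by (metis measure_Un_null_set)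
  moreover have "(B - A) \<union> (A - B) = B - A" using assms(1) by blast
  then have "(\<integral>x\<in>B. X x \<partial>M) = (\<integral>x\<in>A. X x \<partial>M)"
    using assms(4) by (intro set_integral_null_delta[OF X assms(3,2)]) simp
  ultimately show ?thesis by simp
qed

lemma sigma_sets_partition_subset_or_disjoint:
  assumes "S \<in> sigma_sets \<Omega> P" "disjoint P" "\<Union>P = \<Omega>" "B \<in> P"
  shows "B \<subseteq> S \<or> B \<inter> S = {}"
  using assms(1,4)
proof (induction arbitrary: B)
  case (Basic A)
  then show ?case using assms(2) unfolding disjoint_def by blast
next
  case (Compl A)
  then show ?case using assms(3) by blast
qed blast+

lemma (in finite_measure) cond_exp_part_eq_cell_average:
  assumes P: "P \<in> fin_partitions M" and X: "integrable M X"
  shows "AE \<omega> in M. \<forall>A\<in>P. \<omega> \<in> A \<longrightarrow>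
           cond_exp_part M P X \<omega> = (\<integral>x\<in>A. X x \<partial>M) / measure M A"
proof -
  have fin: "finite P" and sets: "P \<subseteq> sets M" and pos: "\<And>A. A \<in> P \<Longrightarrow> measure M A > 0"
    and disj: "disjoint P" and cover: "\<Union>P = space M"
    using P unfolding fin_partitions_def by auto
  define F where "F = sigma (space M) P"
  have "P \<subseteq> Pow (space M)" using sets sets.sets_into_space by auto
  then have sets_F: "sets F = sigma_sets (space M) P" and space_F: "space F = space M"
    unfolding F_def by simp_all
  interpret finite_measure_subalgebra M F
    by unfold_locales
       (use sets_F space_F sets.sigma_sets_subset[OF sets] in \<open>auto simp: subalgebra_def\<close>)
  define avg where "avg A = (\<integral>x\<in>A. X x \<partial>M) / measure M A" for A
  define g where "g \<omega> = (\<Sum>A\<in>P. avg A * indicator A \<omega>)" for \<omega>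
  have g_cell: "g \<omega> = avg A" if "A \<in> P" "\<omega> \<in> A" for A \<omega>
  proof -
    have "g \<omega> = (\<Sum>B\<in>P. if B = A then avg A else 0)"
      unfolding g_def using that disjointD[OF disj]
      by (intro sum.cong) (auto simp: indicator_def)
    then show ?thesis using that fin by simp
  qed
  have g_int: "integrable M g"
    unfolding g_def using sets
    by (intro Bochner_Integration.integrable_sum integrable_mult_right)
       (auto simp: subset_eq less_top[symmetric])
  have cell_integral: "(\<integral>x\<in>A. g x \<partial>M) = (\<integral>x\<in>A. X x \<partial>M)" if A: "A \<in> P" for A
  proof -
    have "(\<integral>x\<in>A. g x \<partial>M) = (\<integral>x\<in>A. avg A \<partial>M)"
      using g_cell[OF A] A sets by (intro set_lebesgue_integral_cong) auto
    also have "\<dots> = (\<integral>x\<in>A. X x \<partial>M)"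
      using A sets pos[OF A] by (subst set_integral_const) (auto simp: avg_def)
    finally show ?thesis .
  qed
  have "AE \<omega> in M. real_cond_exp M F X \<omega> = g \<omega>"
  proof (rule real_cond_exp_charact)
    fix S assume "S \<in> sets F"
    then have S: "S \<in> sigma_sets (space M) P" by (simp add: sets_F)
    define Q where "Q = {B\<in>P. B \<subseteq> S}"
    have "S = \<Union>Q"
      using sigma_sets_partition_subset_or_disjoint[OF S disj cover]
        sigma_sets_into_sp[OF \<open>P \<subseteq> Pow (space M)\<close> S] cover
      unfolding Q_def by blast
    moreover have "finite Q" "Q \<subseteq> sets M" "disjoint Q"
      using fin sets disj by (auto simp: Q_def disjoint_def)
    ultimately show "(\<integral>x\<in>S. X x \<partial>M) = (\<integral>x\<in>S. g x \<partial>M)"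
      using set_integral_disjoint_Union[of Q M X] set_integral_disjoint_Union[of Q M g]
        X g_int cell_integral
      by (simp add: Q_def)
  next
    show "g \<in> borel_measurable F"
      unfolding g_def using sets_F
      by (intro borel_measurable_sum borel_measurable_times borel_measurable_indicator) auto
  qed (use X g_int in auto)
  then show ?thesis
    by eventually_elim (auto simp: cond_exp_part_def F_def g_cell avg_def)
qed

lemma (in prob_space) AE_in_positive_cell:
  assumes "finite Q" "Q \<subseteq> sets M"
  shows "AE \<omega> in M. \<forall>A\<in>Q. \<omega> \<in> A \<longrightarrow> measure M A > 0"
proof -
  have "\<Union>{A\<in>Q. measure M A = 0} \<in> null_sets M"
    using assms by (intro null_sets.finite_Union) (auto simp: emeasure_eq_measure)
  from AE_not_in[OF this] show ?thesis
    by eventually_elim (auto simp: zero_less_measure_iff)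
qed

lemma (in prob_space) fin_partition_absorbing_null_cells:
  assumes fin: "finite Q" and sets: "Q \<subseteq> sets M" and disj: "disjoint Q"
    and cover: "\<Union>Q = space M"
  obtains P where "P \<in> fin_partitions M"
    and "\<And>A. A \<in> Q \<Longrightarrow> measure M A > 0 \<Longrightarrow> \<exists>B\<in>P. A \<subseteq> B \<and> B - A \<in> null_sets M"
proof -
  define Q' where "Q' = {A\<in>Q. measure M A > 0}"
  define N where "N = \<Union>(Q - Q')"
  have N_null: "N \<in> null_sets M"
    unfolding N_def using fin sets
    by (intro null_sets.finite_Union) (auto simp: Q'_def zero_less_measure_iff emeasure_eq_measure subset_eq)
  have "Q' \<noteq> {}"
  proof
    assume "Q' = {}"
    then have "space M \<in> null_sets M" using N_null cover by (simp add: N_def)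
    then show False using emeasure_space_1 by (auto dest: null_setsD1)
  qed
  then obtain A\<^sub>0 where A\<^sub>0: "A\<^sub>0 \<in> Q'" by blast
  define absorb where "absorb A = (if A = A\<^sub>0 then A \<union> N else A)" for A
  define P where "P = absorb ` Q'"
  have Q'_sub: "Q' \<subseteq> Q" by (auto simp: Q'_def)
  have N_disj: "A \<inter> N = {}" if "A \<in> Q'" for A
  proof -
    have "A \<inter> B = {}" if "B \<in> Q - Q'" for B
      using disjointD[OF disj] that \<open>A \<in> Q'\<close> Q'_sub by blast
    then show ?thesis unfolding N_def by blast
  qed
  have absorb_sets: "absorb A \<in> sets M" if "A \<in> Q" for A
    using subsetD[OF sets that] N_null by (auto simp: absorb_def)
  have absorb_measure: "measure M (absorb A) = measure M A" if "A \<in> Q" for A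
    using subsetD[OF sets that] N_null by (auto simp: absorb_def measure_Un_null_set)
  have absorb_null: "absorb A - A \<in> null_sets M" if "A \<in> Q" for A
  proof (rule null_sets_subset[OF N_null])
    show "absorb A - A \<in> sets M" using absorb_sets[OF that] subsetD[OF sets that] by blast
    show "absorb A - A \<subseteq> N" by (auto simp: absorb_def)
  qed
  have "P \<in> fin_partitions M"
    unfolding fin_partitions_def
  proof (intro CollectI conjI ballI)
    show "finite P" using fin Q'_sub by (auto simp: P_def intro: finite_subset)
    show "P \<subseteq> sets M" using absorb_sets Q'_sub by (auto simp: P_def)
    show "measure M B > 0" if "B \<in> P" for B
      using that absorb_measure Q'_sub by (auto simp: P_def Q'_def)
    show "disjoint P"
    proof (rule disjointI)
      fix A B assume "A \<in> P" "B \<in> P" "A \<noteq> B"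
      then obtain A' B' where "A' \<in> Q'" "B' \<in> Q'" "A = absorb A'" "B = absorb B'" "A' \<noteq> B'"
        by (auto simp: P_def)
      moreover have "A' \<inter> B' = {}"
        using disjointD[OF disj] \<open>A' \<in> Q'\<close> \<open>B' \<in> Q'\<close> \<open>A' \<noteq> B'\<close> Q'_sub by blast
      moreover have "absorb A' \<subseteq> A' \<union> N" "absorb B' \<subseteq> B' \<union> N"
        by (auto simp: absorb_def)
      moreover have "absorb A' = A' \<or> absorb B' = B'"
        using \<open>A' \<noteq> B'\<close> by (auto simp: absorb_def)
      ultimately show "A \<inter> B = {}"
        using N_disj[of A'] N_disj[of B'] by blast
    qed
    show "\<Union>P = space M"
    proof
      show "\<Union>P \<subseteq> space M" using \<open>P \<subseteq> sets M\<close> sets.sets_into_space by blast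
      have "space M \<subseteq> \<Union>Q' \<union> N" using cover by (auto simp: N_def)
      also have "\<dots> \<subseteq> \<Union>P"
      proof -
        have "A \<subseteq> absorb A" for A by (simp add: absorb_def)
        moreover have "N \<subseteq> absorb A\<^sub>0" by (simp add: absorb_def)
        ultimately show ?thesis using A\<^sub>0 unfolding P_def by blast
      qed
      finally show "space M \<subseteq> \<Union>P" .
    qed
  qed
  moreover have "\<exists>B\<in>P. A \<subseteq> B \<and> B - A \<in> null_sets M" if "A \<in> Q" "measure M A > 0" for A
  proof -
    have "absorb A \<in> P" using that by (simp add: P_def Q'_def)
    moreover have "A \<subseteq> absorb A" by (simp add: absorb_def)
    ultimately show ?thesis using absorb_null[OF that(1)] by blast
  qed
  ultimately show ?thesis by (rule that)
qed

lemma (in prob_space) cond_exp_part_of_level_sets: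
  assumes fin: "finite (f ` space M)" and sets: "\<And>i. f -` {i} \<inter> space M \<in> sets M"
    and X: "integrable M X"
  shows "\<exists>P\<in>fin_partitions M. AE \<omega> in M.
           measure M (f -` {f \<omega>} \<inter> space M) > 0 \<and>
           cond_exp_part M P X \<omega> =
             (\<integral>x\<in>f -` {f \<omega>} \<inter> space M. X x \<partial>M) / measure M (f -` {f \<omega>} \<inter> space M)"
proof -
  define level where "level \<omega> = f -` {f \<omega>} \<inter> space M" for \<omega>
  define Q where "Q = level ` space M"
  have Q_fin: "finite Q"
  proof -
    have "Q = (\<lambda>i. f -` {i} \<inter> space M) ` (f ` space M)" by (auto simp: Q_def level_def)
    then show ?thesis using fin by simp
  qed
  have Q_sets: "Q \<subseteq> sets M" using sets by (auto simp: Q_def level_def)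
  have Q_disj: "disjoint Q"
    by (rule disjointI) (auto simp: Q_def level_def)
  have Q_cover: "\<Union>Q = space M" by (auto simp: Q_def level_def)
  obtain P where P: "P \<in> fin_partitions M"
    and absorbed: "\<And>A. A \<in> Q \<Longrightarrow> measure M A > 0 \<Longrightarrow> \<exists>B\<in>P. A \<subseteq> B \<and> B - A \<in> null_sets M"
    using fin_partition_absorbing_null_cells[OF Q_fin Q_sets Q_disj Q_cover] by blast
  have "AE \<omega> in M. measure M (level \<omega>) > 0 \<and>
      cond_exp_part M P X \<omega> = (\<integral>x\<in>level \<omega>. X x \<partial>M) / measure M (level \<omega>)"
    using cond_exp_part_eq_cell_average[OF P X] AE_in_positive_cell[OF Q_fin Q_sets] AE_space
  proof eventually_elim
    case (elim \<omega>)
    have level: "level \<omega> \<in> Q" "\<omega> \<in> level \<omega>" using elim(3) by (auto simp: Q_def level_def)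
    then have pos: "measure M (level \<omega>) > 0" using elim(2) by blast
    then obtain B where B: "B \<in> P" "level \<omega> \<subseteq> B" "B - level \<omega> \<in> null_sets M"
      using absorbed level(1) by blast
    have "B \<in> sets M" using P B(1) by (auto simp: fin_partitions_def)
    have "cond_exp_part M P X \<omega> = (\<integral>x\<in>B. X x \<partial>M) / measure M B"
      using elim(1) B(1,2) level(2) by blast
    also have "\<dots> = (\<integral>x\<in>level \<omega>. X x \<partial>M) / measure M (level \<omega>)"
      using set_average_null_extension[OF B(2) subsetD[OF Q_sets level(1)] \<open>B \<in> sets M\<close> B(3) X] .
    finally show ?case using pos by blast
  qed
  then show ?thesis using P unfolding level_def by blast
qed

lemma (in finite_measure) set_average_bounds:
  assumes A: "A \<in> sets M" "measure M A > 0" and X: "integrable M X"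
    and bounds: "\<And>x. x \<in> A \<Longrightarrow> lo \<le> X x \<and> X x \<le> hi"
  shows "lo \<le> (\<integral>x\<in>A. X x \<partial>M) / measure M A \<and> (\<integral>x\<in>A. X x \<partial>M) / measure M A \<le> hi"
proof -
  have X_A: "set_integrable M A X"
    unfolding set_integrable_def using X by (rule integrable_mult_indicator[OF A(1)])
  have const_A: "set_integrable M A (\<lambda>_. r)" and integral_const_A: "(\<integral>x\<in>A. r \<partial>M) = measure M A * r"
    for r :: real
    using A(1) by (auto simp: set_integrable_def set_integral_const integrable_indicator_iff less_top[symmetric])
  have "measure M A * lo \<le> (\<integral>x\<in>A. X x \<partial>M)" "(\<integral>x\<in>A. X x \<partial>M) \<le> measure M A * hi"
    using set_integral_mono[OF const_A X_A, of lo] set_integral_mono[OF X_A const_A, of hi] bounds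
    by (auto simp: integral_const_A)
  then show ?thesis using A(2) by (simp add: pos_le_divide_eq pos_divide_le_eq mult.commute)
qed

lemma (in finite_measure) jensens_inequality_set_average:
  fixes q :: "real \<Rightarrow> real"
  assumes A: "A \<in> sets M" "measure M A > 0"
    and V: "integrable M V" "\<And>x. x \<in> A \<Longrightarrow> V x \<in> I"
    and I: "I = {a <..< b} \<or> I = {a <..} \<or> I = {..< b} \<or> I = UNIV"
    and q: "integrable M (\<lambda>x. q (V x))" "convex_on I q"
  shows "q ((\<integral>x\<in>A. V x \<partial>M) / measure M A) * measure M A \<le> (\<integral>x\<in>A. q (V x) \<partial>M)"
proof -
  define m where "m = measure M A"
  define g where "g x = indicator A x / m" for x
  define U where "U = density M (\<lambda>x. ennreal (g x))"
  have g_meas [measurable]: "g \<in> borel_measurable M" unfolding g_def using A(1) by measurable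
  have g_nonneg: "AE x in M. 0 \<le> g x" using A(2) by (simp add: g_def m_def)
  have U_integral: "integral\<^sup>L U f = (\<integral>x\<in>A. f x \<partial>M) / m" if "f \<in> borel_measurable M" for f :: "'a \<Rightarrow> real"
    using integral_density[OF that g_meas g_nonneg]
    by (simp add: U_def g_def set_lebesgue_integral_def)
  have U_integrable: "integrable U f" if "integrable M f" for f :: "'a \<Rightarrow> real"
    unfolding U_def using that
    by (subst integrable_density[OF borel_measurable_integrable[OF that] g_meas g_nonneg])
       (use integrable_real_mult_indicator[OF A(1) that] in \<open>simp add: g_def mult.commute\<close>)
  have "prob_space U"
  proof
    have "emeasure U (space U) = (\<integral>\<^sup>+x. ennreal (1 / m) * indicator A x \<partial>M)"
      unfolding U_def using A(1)
      by (auto simp: emeasure_density g_def indicator_def intro!: nn_integral_cong)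
    also have "\<dots> = 1"
      using A by (simp add: nn_integral_cmult_indicator emeasure_eq_measure m_def ennreal_mult'[symmetric])
    finally show "emeasure U (space U) = 1" .
  qed
  moreover have "AE x in U. V x \<in> I"
    unfolding U_def using V(2) by (subst AE_density) (measurable, auto simp: g_def indicator_def)
  ultimately have "q (integral\<^sup>L U V) \<le> integral\<^sup>L U (\<lambda>x. q (V x))"
    using prob_space.jensens_inequality[OF _ U_integrable[OF V(1)] _ I U_integrable[OF q(1)] q(2)]
    by blast
  then show ?thesis
    using A(2) V(1) q(1) by (simp add: U_integral m_def pos_le_divide_eq)
qed

lemma orlicz_function_mono:
  assumes "orlicz_function \<Phi>" "0 \<le> s" "s \<le> t"
  shows "\<Phi> s \<le> \<Phi> t"
  using assms unfolding orlicz_function_def by (auto intro: mono_onD)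

lemma orlicz_function_nonneg:
  assumes "orlicz_function \<Phi>" "0 \<le> t"
  shows "0 \<le> \<Phi> t"
  using orlicz_function_mono[OF assms(1) order_refl assms(2)] assms(1)
  by (simp add: orlicz_function_def)

lemma orlicz_function_scale_le:
  assumes "orlicz_function \<Phi>" "0 \<le> t" "0 \<le> s" "s \<le> 1"
  shows "\<Phi> (s * t) \<le> s * \<Phi> t"
proof -
  have "\<Phi> ((1 - s) *\<^sub>R 0 + s *\<^sub>R t) \<le> (1 - s) * \<Phi> 0 + s * \<Phi> t"
    using assms by (intro convex_onD[where A = "{0..}"]) (auto simp: orlicz_function_def)
  then show ?thesis using assms(1) by (simp add: orlicz_function_def)
qed

lemma orlicz_function_midpoint_le:
  assumes "orlicz_function \<Phi>" "0 \<le> s" "0 \<le> t"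
  shows "\<Phi> ((s + t) / 2) \<le> (\<Phi> s + \<Phi> t) / 2"
proof -
  have midpoint: "(s + t) / 2 = (1 - 1/2) *\<^sub>R s + (1/2) *\<^sub>R t"
    by simp
  have "\<Phi> ((s + t) / 2) \<le> (1 - 1/2) * \<Phi> s + (1/2) * \<Phi> t"
    unfolding midpoint using assms
    by (intro convex_onD[where A = "{0..}"]) (auto simp: orlicz_function_def)
  then show ?thesis by argo
qed

lemma orlicz_function_eventually_ge:
  assumes "orlicz_function \<Phi>"
  obtains t\<^sub>0 where "t\<^sub>0 > 0" "\<And>t. t \<ge> t\<^sub>0 \<Longrightarrow> t \<le> \<Phi> t"
proof -
  have "eventually (\<lambda>t. 1 \<le> \<Phi> t / t) at_top"
    using assms unfolding orlicz_function_def filterlim_at_top by simp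
  then obtain t\<^sub>1 where t\<^sub>1: "\<And>t. t \<ge> t\<^sub>1 \<Longrightarrow> 1 \<le> \<Phi> t / t"
    unfolding eventually_at_top_linorder by blast
  have "t \<le> \<Phi> t" if "t \<ge> max 1 t\<^sub>1" for t
  proof -
    have "t > 0" "1 \<le> \<Phi> t / t" using that t\<^sub>1[of t] by auto
    then show ?thesis by (simp add: le_divide_eq)
  qed
  then show ?thesis using that[of "max 1 t\<^sub>1"] by simp
qed

lemma borel_measurable_orlicz_function:
  assumes \<Phi>: "orlicz_function \<Phi>" and f: "f \<in> borel_measurable M"
    and nonneg: "\<And>x. x \<in> space M \<Longrightarrow> 0 \<le> f x"
  shows "(\<lambda>x. \<Phi> (f x)) \<in> borel_measurable M"
proof -
  have "mono (\<lambda>t. \<Phi> (max 0 t))"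
  proof (rule monoI)
    fix x y :: real assume "x \<le> y"
    then show "\<Phi> (max 0 x) \<le> \<Phi> (max 0 y)"
      by (intro orlicz_function_mono[OF \<Phi>]) auto
  qed
  from borel_measurable_mono[OF this] have "(\<lambda>x. \<Phi> (max 0 (f x))) \<in> borel_measurable M"
    using f by measurable
  then show ?thesis
    by (rule measurable_cong[THEN iffD1, rotated]) (simp add: nonneg max_absorb2)
qed

lemma in_orlicz_integrable:
  assumes fin: "finite_measure M" and \<Phi>: "orlicz_function \<Phi>" and X: "in_orlicz M \<Phi> X"
  shows "integrable M X"
proof -
  obtain c where X_meas: "X \<in> borel_measurable M" and c: "c > 0"
    and modular: "(\<integral>\<^sup>+\<omega>. ennreal (\<Phi> (\<bar>X \<omega>\<bar> / c)) \<partial>M) \<le> 1"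
    using X unfolding in_orlicz_def by blast
  define Y where "Y \<omega> = \<Phi> (\<bar>X \<omega>\<bar> / c)" for \<omega>
  have Y_nonneg: "0 \<le> Y \<omega>" for \<omega>
    using c by (simp add: Y_def orlicz_function_nonneg[OF \<Phi>])
  have Y_meas: "Y \<in> borel_measurable M"
    unfolding Y_def using X_meas c by (intro borel_measurable_orlicz_function[OF \<Phi>]) auto
  have "(\<integral>\<^sup>+\<omega>. ennreal (norm (Y \<omega>)) \<partial>M) = (\<integral>\<^sup>+\<omega>. ennreal (\<Phi> (\<bar>X \<omega>\<bar> / c)) \<partial>M)"
    using Y_nonneg by (simp add: Y_def)
  then have "integrable M Y"
    using le_less_trans[OF modular ennreal_one_less_top] by (intro integrableI_bounded[OF Y_meas]) simp
  obtain t\<^sub>0 where t\<^sub>0: "t\<^sub>0 > 0" "\<And>t. t \<ge> t\<^sub>0 \<Longrightarrow> t \<le> \<Phi> t"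
    using orlicz_function_eventually_ge[OF \<Phi>] by blast
  have bound: "\<bar>X \<omega>\<bar> \<le> c * t\<^sub>0 + c * Y \<omega>" for \<omega>
  proof (cases "\<bar>X \<omega>\<bar> / c \<ge> t\<^sub>0")
    case True
    then have "\<bar>X \<omega>\<bar> / c \<le> Y \<omega>" using t\<^sub>0(2) by (simp add: Y_def)
    then show ?thesis using c t\<^sub>0(1) by (simp add: divide_le_eq mult.commute add_increasing)
  next
    case False
    then have "\<bar>X \<omega>\<bar> < c * t\<^sub>0" using c by (simp add: not_le pos_divide_less_eq mult.commute)
    moreover have "0 \<le> c * Y \<omega>" using c Y_nonneg[of \<omega>] by simp
    ultimately show ?thesis by linarith
  qed
  have "integrable M (\<lambda>\<omega>. c * t\<^sub>0 + c * Y \<omega>)"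
    by (intro Bochner_Integration.integrable_add integrable_mult_right
        finite_measure.integrable_const[OF fin] \<open>integrable M Y\<close>)
  moreover have "norm (X \<omega>) \<le> norm (c * t\<^sub>0 + c * Y \<omega>)" for \<omega>
    using bound[of \<omega>] abs_ge_self[of "c * t\<^sub>0 + c * Y \<omega>"] unfolding real_norm_def by linarith
  ultimately show ?thesis
    by (intro Bochner_Integration.integrable_bound[OF _ X_meas AE_I2])
qed

lemma orlicz_function_add_le:
  assumes \<Phi>: "orlicz_function \<Phi>" and a: "0 < a" "a \<le> c" and b: "0 < b" "b \<le> c"
  shows "\<Phi> (\<bar>x + y\<bar> / (2 * c)) \<le> (\<Phi> (\<bar>x\<bar> / a) + \<Phi> (\<bar>y\<bar> / b)) / 2"
proof -
  have c: "c > 0" using a by simp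
  have "\<bar>x + y\<bar> / (2 * c) \<le> (\<bar>x\<bar> + \<bar>y\<bar>) / (2 * c)"
    using c by (intro divide_right_mono abs_triangle_ineq) simp
  also have "\<dots> = (\<bar>x\<bar> / c + \<bar>y\<bar> / c) / 2"
    using c by (simp add: field_simps)
  finally have "\<Phi> (\<bar>x + y\<bar> / (2 * c)) \<le> \<Phi> ((\<bar>x\<bar> / c + \<bar>y\<bar> / c) / 2)"
    using c by (intro orlicz_function_mono[OF \<Phi>]) simp_all
  also have "\<dots> \<le> (\<Phi> (\<bar>x\<bar> / c) + \<Phi> (\<bar>y\<bar> / c)) / 2"
    using c by (intro orlicz_function_midpoint_le[OF \<Phi>]) simp_all
  also have "\<dots> \<le> (\<Phi> (\<bar>x\<bar> / a) + \<Phi> (\<bar>y\<bar> / b)) / 2"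
  proof -
    have "\<bar>x\<bar> / c \<le> \<bar>x\<bar> / a" "\<bar>y\<bar> / c \<le> \<bar>y\<bar> / b"
      using a b by (simp_all add: divide_left_mono)
    then show ?thesis
      using c by (intro divide_right_mono add_mono orlicz_function_mono[OF \<Phi>]) simp_all
  qed
  finally show ?thesis .
qed

lemma in_orlicz_add:
  assumes \<Phi>: "orlicz_function \<Phi>" and f: "in_orlicz M \<Phi> f" and g: "in_orlicz M \<Phi> g"
  shows "in_orlicz M \<Phi> (\<lambda>x. f x + g x)"
proof -
  obtain a b where f_meas: "f \<in> borel_measurable M" and a: "a > 0"
    and f_mod: "(\<integral>\<^sup>+x. ennreal (\<Phi> (\<bar>f x\<bar> / a)) \<partial>M) \<le> 1"
    and g_meas: "g \<in> borel_measurable M" and b: "b > 0"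
    and g_mod: "(\<integral>\<^sup>+x. ennreal (\<Phi> (\<bar>g x\<bar> / b)) \<partial>M) \<le> 1"
    using f g unfolding in_orlicz_def by blast
  define c where "c = max a b"
  have c: "c > 0" "a \<le> c" "b \<le> c" using a b by (auto simp: c_def)
  have pointwise: "\<Phi> (\<bar>f x + g x\<bar> / (2 * c)) \<le> (\<Phi> (\<bar>f x\<bar> / a) + \<Phi> (\<bar>g x\<bar> / b)) / 2" for x
    using a b c by (intro orlicz_function_add_le[OF \<Phi>])
  have "(\<integral>\<^sup>+x. ennreal (\<Phi> (\<bar>f x + g x\<bar> / (2 * c))) \<partial>M) \<le>
      (\<integral>\<^sup>+x. (ennreal (\<Phi> (\<bar>f x\<bar> / a)) + ennreal (\<Phi> (\<bar>g x\<bar> / b))) / 2 \<partial>M)"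
  proof (intro nn_integral_mono)
    fix x
    have "0 \<le> \<Phi> (\<bar>f x\<bar> / a)" "0 \<le> \<Phi> (\<bar>g x\<bar> / b)"
      using a b by (simp_all add: orlicz_function_nonneg[OF \<Phi>])
    then have eq: "ennreal ((\<Phi> (\<bar>f x\<bar> / a) + \<Phi> (\<bar>g x\<bar> / b)) / 2) =
        (ennreal (\<Phi> (\<bar>f x\<bar> / a)) + ennreal (\<Phi> (\<bar>g x\<bar> / b))) / 2"
      by (simp add: ennreal_divide_numeral ennreal_plus[symmetric] del: ennreal_plus)
    then show "ennreal (\<Phi> (\<bar>f x + g x\<bar> / (2 * c))) \<le>
        (ennreal (\<Phi> (\<bar>f x\<bar> / a)) + ennreal (\<Phi> (\<bar>g x\<bar> / b))) / 2"
      using ennreal_leI[OF pointwise[of x]] by (simp only: eq)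
  qed
  also have "\<dots> = ((\<integral>\<^sup>+x. ennreal (\<Phi> (\<bar>f x\<bar> / a)) \<partial>M) + (\<integral>\<^sup>+x. ennreal (\<Phi> (\<bar>g x\<bar> / b)) \<partial>M)) / 2"
  proof -
    have [measurable]: "(\<lambda>x. ennreal (\<Phi> (\<bar>f x\<bar> / a))) \<in> borel_measurable M"
      using f_meas a
      by (intro measurable_compose[OF _ measurable_ennreal] borel_measurable_orlicz_function[OF \<Phi>]) auto
    have [measurable]: "(\<lambda>x. ennreal (\<Phi> (\<bar>g x\<bar> / b))) \<in> borel_measurable M"
      using g_meas b
      by (intro measurable_compose[OF _ measurable_ennreal] borel_measurable_orlicz_function[OF \<Phi>]) auto
    show ?thesis by (simp add: nn_integral_divide nn_integral_add)
  qed
  also have "\<dots> \<le> (1 + 1) / 2"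
    using f_mod g_mod by (intro divide_right_mono_ennreal add_mono)
  also have "\<dots> = 1"
    by (simp add: ennreal_divide_self)
  finally have "(\<integral>\<^sup>+x. ennreal (\<Phi> (\<bar>f x + g x\<bar> / (2 * c))) \<partial>M) \<le> 1" .
  moreover have "(\<lambda>x. f x + g x) \<in> borel_measurable M" using f_meas g_meas by simp
  moreover have "2 * c > 0" using c(1) by simp
  ultimately show ?thesis unfolding in_orlicz_def by blast
qed

lemma (in prob_space) in_orlicz_const:
  assumes \<Phi>: "orlicz_function \<Phi>"
  shows "in_orlicz M \<Phi> (\<lambda>_. r)"
proof -
  define c where "c = (\<bar>r\<bar> + 1) * (\<Phi> 1 + 1)"
  have "0 \<le> \<Phi> 1" using orlicz_function_nonneg[OF \<Phi>] by simp
  moreover have "c = 1 + \<bar>r\<bar> + \<Phi> 1 + \<bar>r\<bar> * \<Phi> 1" by (simp add: c_def algebra_simps)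
  moreover have "0 \<le> \<bar>r\<bar> * \<Phi> 1" using \<open>0 \<le> \<Phi> 1\<close> by simp
  ultimately have "\<bar>r\<bar> \<le> c" "\<bar>r\<bar> * \<Phi> 1 \<le> c" "c > 0" by linarith+
  then have c: "c > 0" "\<bar>r\<bar> / c \<le> 1" "\<bar>r\<bar> / c * \<Phi> 1 \<le> 1" by (simp_all add: divide_le_eq)
  have "\<Phi> (\<bar>r\<bar> / c * 1) \<le> \<bar>r\<bar> / c * \<Phi> 1"
    using c by (intro orlicz_function_scale_le[OF \<Phi>]) auto
  then have "\<Phi> (\<bar>r\<bar> / c) \<le> 1" using c(3) unfolding mult_1_right by linarith
  then show ?thesis
    unfolding in_orlicz_def using c by (intro conjI exI[of _ c]) (auto simp: emeasure_space_1)
qed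

locale orlicz_variable = prob_space M for M :: "'a measure" +
  fixes \<Phi> :: "real \<Rightarrow> real" and X :: "'a \<Rightarrow> real" and c :: real
  assumes orlicz: "orlicz_function \<Phi>"
    and X_meas [measurable]: "X \<in> borel_measurable M"
    and c_pos: "c > 0"
    and modular_le_1: "(\<integral>\<^sup>+\<omega>. ennreal (\<Phi> (\<bar>X \<omega>\<bar> / c)) \<partial>M) \<le> 1"
begin

lemma in_orlicz_X: "in_orlicz M \<Phi> X"
  unfolding in_orlicz_def using c_pos modular_le_1 by auto

lemma integrable_X: "integrable M X"
  using in_orlicz_integrable[OF _ orlicz in_orlicz_X] finite_measure_axioms by blast

lemma modular_nonneg: "0 \<le> \<Phi> (\<bar>X \<omega>\<bar> / c)"
  using c_pos by (simp add: orlicz_function_nonneg[OF orlicz])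

lemma modular_measurable [measurable]: "(\<lambda>\<omega>. \<Phi> (\<bar>X \<omega>\<bar> / c)) \<in> borel_measurable M"
  using c_pos by (intro borel_measurable_orlicz_function[OF orlicz]) auto

lemma integrable_modular: "integrable M (\<lambda>\<omega>. \<Phi> (\<bar>X \<omega>\<bar> / c))"
proof (rule integrableI_bounded)
  show "(\<integral>\<^sup>+\<omega>. ennreal (norm (\<Phi> (\<bar>X \<omega>\<bar> / c))) \<partial>M) < \<infinity>"
    using le_less_trans[OF modular_le_1 ennreal_one_less_top] by (simp add: modular_nonneg)
qed simp

definition tail :: "real \<Rightarrow> 'a set" where
  "tail K = {\<omega>\<in>space M. K \<le> \<bar>X \<omega>\<bar>}"

definition tail_average :: "real \<Rightarrow> real" where
  "tail_average K = (\<integral>x\<in>tail K. X x \<partial>M) / measure M (tail K)"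

lemma tail_sets [measurable]: "tail K \<in> sets M"
  unfolding tail_def by measurable

lemma tail_modular_tendsto_0:
  "(\<lambda>K::nat. \<integral>x\<in>tail (real K). \<Phi> (\<bar>X x\<bar> / c) \<partial>M) \<longlonglongrightarrow> 0"
proof -
  have "decseq (\<lambda>K::nat. tail (real K))"
    by (rule decseq_SucI) (auto simp: tail_def)
  moreover have "(\<Inter>K::nat. tail (real K)) = {}"
  proof -
    have "\<omega> \<notin> tail (real (nat \<lceil>\<bar>X \<omega>\<bar>\<rceil> + 1))" for \<omega>
      by (auto simp: tail_def) linarith
    then show ?thesis by blast
  qed
  moreover have "set_integrable M (tail 0) (\<lambda>x. \<Phi> (\<bar>X x\<bar> / c))"
    unfolding set_integrable_def by (intro integrable_mult_indicator tail_sets integrable_modular)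
  ultimately show ?thesis
    using set_integral_cont_down[of "\<lambda>K. tail (real K)" M "\<lambda>x. \<Phi> (\<bar>X x\<bar> / c)"]
    by (simp add: set_lebesgue_integral_def)
qed

lemma tail_average_jensen:
  assumes "K > 0"
  shows "\<Phi> (\<bar>tail_average K\<bar> / c) * measure M (tail K) \<le> (\<integral>x\<in>tail K. \<Phi> (\<bar>X x\<bar> / c) \<partial>M)"
proof (cases "measure M (tail K) = 0")
  case True
  have "0 \<le> (\<integral>x\<in>tail K. \<Phi> (\<bar>X x\<bar> / c) \<partial>M)"
    unfolding set_lebesgue_integral_def by (intro Bochner_Integration.integral_nonneg) (simp add: modular_nonneg)
  then show ?thesis using True by simp
next
  case False
  then have pos: "measure M (tail K) > 0" by (simp add: zero_less_measure_iff)
  have "\<bar>\<integral>x\<in>tail K. X x \<partial>M\<bar> \<le> (\<integral>x\<in>tail K. \<bar>X x\<bar> \<partial>M)"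
    using set_integral_norm_bound[of M "tail K" X] integrable_mult_indicator[OF tail_sets integrable_X]
    by (simp add: set_integrable_def)
  then have "\<bar>tail_average K\<bar> / c \<le> (\<integral>x\<in>tail K. \<bar>X x\<bar> / c \<partial>M) / measure M (tail K)"
    using pos c_pos by (simp add: tail_average_def abs_divide mult.commute divide_right_mono)
  then have "\<Phi> (\<bar>tail_average K\<bar> / c) \<le> \<Phi> ((\<integral>x\<in>tail K. \<bar>X x\<bar> / c \<partial>M) / measure M (tail K))"
    using c_pos by (intro orlicz_function_mono[OF orlicz]) auto
  \<comment> \<open>\<open>K > 0\<close> keeps \<open>|X|/c\<close> inside the open interval that Jensen's inequality requires\<close>
  also have "\<dots> * measure M (tail K) \<le> (\<integral>x\<in>tail K. \<Phi> (\<bar>X x\<bar> / c) \<partial>M)"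
  proof (rule jensens_inequality_set_average[where I = "{0<..}"])
    show "integrable M (\<lambda>x. \<bar>X x\<bar> / c)" using integrable_X by simp
    show "\<bar>X x\<bar> / c \<in> {0<..}" if "x \<in> tail K" for x
      using that assms c_pos by (auto simp: tail_def)
    show "convex_on {0<..} \<Phi>"
      using orlicz by (auto simp: orlicz_function_def intro: convex_on_subset)
  qed (use pos integrable_modular in auto)
  finally show ?thesis using pos by (simp add: mult_right_mono)
qed

lemma exists_cutoffs:
  "\<exists>\<kappa>::nat \<Rightarrow> nat. \<forall>n. n < \<kappa> n \<and> (\<integral>x\<in>tail (real (\<kappa> n)). \<Phi> (\<bar>X x\<bar> / c) \<partial>M) \<le> (1/2)^Suc n"
proof (intro choice allI)
  fix n
  have "eventually (\<lambda>K. n < K \<and> (\<integral>x\<in>tail (real K). \<Phi> (\<bar>X x\<bar> / c) \<partial>M) < (1/2)^Suc n) sequentially"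
    using order_tendstoD(2)[OF tail_modular_tendsto_0, of "(1/2)^Suc n"]
    by (intro eventually_conj eventually_gt_at_top) simp_all
  then obtain K where "n < K" "(\<integral>x\<in>tail (real K). \<Phi> (\<bar>X x\<bar> / c) \<partial>M) < (1/2)^Suc n"
    unfolding eventually_sequentially by blast
  then show "\<exists>K. n < K \<and> (\<integral>x\<in>tail (real K). \<Phi> (\<bar>X x\<bar> / c) \<partial>M) \<le> (1/2)^Suc n"
    by (intro exI[of _ K]) simp
qed

end

locale orlicz_variable_cutoffs = orlicz_variable +
  fixes \<kappa> :: "nat \<Rightarrow> nat"
  assumes cutoff_gt: "n < \<kappa> n"
    and cutoff_tail: "(\<integral>x\<in>tail (real (\<kappa> n)). \<Phi> (\<bar>X x\<bar> / c) \<partial>M) \<le> (1/2)^Suc n"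
begin

definition quantizer :: "nat \<Rightarrow> 'a \<Rightarrow> int option" where
  "quantizer n \<omega> = (if \<bar>X \<omega>\<bar> < real (\<kappa> n) then Some \<lfloor>X \<omega> * 2^n\<rfloor> else None)"

definition cell :: "nat \<Rightarrow> 'a \<Rightarrow> 'a set" where
  "cell n \<omega> = quantizer n -` {quantizer n \<omega>} \<inter> space M"

definition cell_average :: "nat \<Rightarrow> 'a \<Rightarrow> real" where
  "cell_average n \<omega> = (\<integral>x\<in>cell n \<omega>. X x \<partial>M) / measure M (cell n \<omega>)"

lemma finite_quantizer_range: "finite (quantizer n ` space M)"
proof -
  define R where "R = int (\<kappa> n) * 2^n"
  have "quantizer n \<omega> \<in> insert None (Some ` {-R..R})" for \<omega>
  proof (cases "\<bar>X \<omega>\<bar> < real (\<kappa> n)")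
    case True
    then have "\<bar>X \<omega> * 2^n\<bar> < real (\<kappa> n) * 2^n" by (simp add: abs_mult)
    moreover have "of_int (- R) = - (real (\<kappa> n) * 2^n)" "of_int R = real (\<kappa> n) * 2^n"
      by (simp_all add: R_def)
    ultimately have "- R \<le> \<lfloor>X \<omega> * 2^n\<rfloor>" "\<lfloor>X \<omega> * 2^n\<rfloor> \<le> R"
      unfolding le_floor_iff floor_le_iff abs_less_iff by linarith+
    then show ?thesis using True by (simp add: quantizer_def)
  qed (simp add: quantizer_def)
  then have "quantizer n ` space M \<subseteq> insert None (Some ` {-R..R})" by (rule image_subsetI)
  then show ?thesis by (rule finite_subset) simp
qed

lemma quantizer_level_sets: "quantizer n -` {q} \<inter> space M \<in> sets M"
proof (cases q)
  case None
  then have "quantizer n -` {q} \<inter> space M = tail (real (\<kappa> n))"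
    by (auto simp: quantizer_def tail_def not_less split: if_splits)
  then show ?thesis by simp
next
  case (Some k)
  then have "quantizer n -` {q} \<inter> space M =
      {\<omega>\<in>space M. \<bar>X \<omega>\<bar> < real (\<kappa> n) \<and> of_int k \<le> X \<omega> * 2^n \<and> X \<omega> * 2^n < of_int k + 1}"
    by (auto simp: quantizer_def floor_eq_iff split: if_splits)
  then show ?thesis by simp
qed

lemma cell_tail:
  assumes "\<omega> \<in> space M" "real (\<kappa> n) \<le> \<bar>X \<omega>\<bar>"
  shows "cell n \<omega> = tail (real (\<kappa> n))"
  using assms by (auto simp: cell_def quantizer_def tail_def not_less split: if_splits)

lemma cell_oscillation:
  assumes "\<bar>X \<omega>\<bar> < real (\<kappa> n)" "y \<in> cell n \<omega>"
  shows "\<bar>X y - X \<omega>\<bar> < (1/2)^n"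
proof -
  have "\<lfloor>X y * 2^n\<rfloor> = \<lfloor>X \<omega> * 2^n\<rfloor>"
    using assms by (auto simp: cell_def quantizer_def split: if_splits)
  then have "\<bar>X y * 2^n - X \<omega> * 2^n\<bar> < 1" by linarith
  then have "\<bar>X y - X \<omega>\<bar> * 2^n < 1" by (simp add: abs_mult left_diff_distrib[symmetric])
  then show ?thesis by (simp add: power_one_over pos_less_divide_eq)
qed

lemma cell_average_close:
  assumes "measure M (cell n \<omega>) > 0" "\<bar>X \<omega>\<bar> < real (\<kappa> n)"
  shows "\<bar>cell_average n \<omega> - X \<omega>\<bar> \<le> (1/2)^n"
proof -
  have "X \<omega> - (1/2)^n \<le> cell_average n \<omega> \<and> cell_average n \<omega> \<le> X \<omega> + (1/2)^n"
    unfolding cell_average_def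
  proof (rule set_average_bounds[OF _ assms(1) integrable_X])
    show "cell n \<omega> \<in> sets M" unfolding cell_def by (rule quantizer_level_sets)
    show "X \<omega> - (1/2)^n \<le> X y \<and> X y \<le> X \<omega> + (1/2)^n" if "y \<in> cell n \<omega>" for y
      using cell_oscillation[OF assms(2) that] by linarith
  qed
  then show ?thesis by linarith
qed

text \<open>Since \<open>\<kappa> k > k\<close>, \<open>\<omega> \<in> tail (\<kappa> k)\<close> forces \<open>k \<le> \<lfloor>|X \<omega>|\<rfloor>\<close>, so this finite maximum is the
  supremum over all \<open>k\<close>.\<close>
definition tail_envelope :: "'a \<Rightarrow> real" where
  "tail_envelope \<omega> =
     Max ((\<lambda>k. \<bar>tail_average (\<kappa> k)\<bar> * indicator (tail (\<kappa> k)) \<omega>) ` {..nat \<lfloor>\<bar>X \<omega>\<bar>\<rfloor>})"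

lemma tail_average_le_envelope:
  assumes "\<omega> \<in> tail (real (\<kappa> k))"
  shows "\<bar>tail_average (\<kappa> k)\<bar> \<le> tail_envelope \<omega>"
proof -
  have "real k < \<bar>X \<omega>\<bar>" using assms cutoff_gt[of k] by (auto simp: tail_def)
  then have "k \<in> {..nat \<lfloor>\<bar>X \<omega>\<bar>\<rfloor>}" by (simp add: le_nat_floor)
  then have "\<bar>tail_average (\<kappa> k)\<bar> * indicator (tail (\<kappa> k)) \<omega> \<in>
      (\<lambda>k. \<bar>tail_average (\<kappa> k)\<bar> * indicator (tail (\<kappa> k)) \<omega>) ` {..nat \<lfloor>\<bar>X \<omega>\<bar>\<rfloor>}"
    by (rule imageI)
  then show ?thesis
    unfolding tail_envelope_def using Max_ge[OF finite_imageI[OF finite_atMost]] assms by simp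
qed

lemma tail_envelope_nonneg: "0 \<le> tail_envelope \<omega>"
  unfolding tail_envelope_def by (rule order_trans[OF _ Max_ge[of _ "\<bar>tail_average (\<kappa> 0)\<bar> * indicator (tail (\<kappa> 0)) \<omega>"]]) auto

lemma tail_envelope_measurable [measurable]: "tail_envelope \<in> borel_measurable M"
proof -
  have index_meas: "(\<lambda>\<omega>. nat \<lfloor>\<bar>X \<omega>\<bar>\<rfloor>) \<in> measurable M (count_space UNIV)" by measurable
  show ?thesis
    unfolding tail_envelope_def
    by (rule measurable_compose_countable'[OF _ index_meas,
          where f = "\<lambda>N \<omega>. Max ((\<lambda>k. \<bar>tail_average (\<kappa> k)\<bar> * indicator (tail (\<kappa> k)) \<omega>) ` {..N})"])
       (auto intro!: borel_measurable_Max)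
qed

end

context orlicz_variable_cutoffs
begin

lemma tail_envelope_modular_le_suminf:
  "ennreal (\<Phi> (tail_envelope \<omega> / c)) \<le>
     (\<Sum>k. ennreal (\<Phi> (\<bar>tail_average (\<kappa> k)\<bar> / c) * indicator (tail (\<kappa> k)) \<omega>))"
    (is "_ \<le> (\<Sum>k. ?h k)")
proof -
  have "tail_envelope \<omega> \<in> (\<lambda>k. \<bar>tail_average (\<kappa> k)\<bar> * indicator (tail (\<kappa> k)) \<omega>) ` {..nat \<lfloor>\<bar>X \<omega>\<bar>\<rfloor>}"
    unfolding tail_envelope_def by (rule Max_in) auto
  then obtain k where k: "tail_envelope \<omega> = \<bar>tail_average (\<kappa> k)\<bar> * indicator (tail (\<kappa> k)) \<omega>"
    by blast
  have "\<Phi> 0 = 0" using orlicz by (simp add: orlicz_function_def)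
  then have "ennreal (\<Phi> (tail_envelope \<omega> / c)) = ?h k"
    by (cases "\<omega> \<in> tail (\<kappa> k)") (simp_all add: k)
  also have "\<dots> \<le> (\<Sum>k. ?h k)"
    using sum_le_suminf[OF summableI, of "{k}" ?h] by simp
  finally show ?thesis .
qed

lemma nn_integral_tail_term_le:
  "(\<integral>\<^sup>+\<omega>. ennreal (\<Phi> (\<bar>tail_average (\<kappa> k)\<bar> / c) * indicator (tail (\<kappa> k)) \<omega>) \<partial>M)
     \<le> ennreal ((1/2)^Suc k)"
proof -
  have nonneg: "0 \<le> \<Phi> (\<bar>tail_average (\<kappa> k)\<bar> / c)"
    using c_pos by (simp add: orlicz_function_nonneg[OF orlicz])
  have "(\<integral>\<^sup>+\<omega>. ennreal (\<Phi> (\<bar>tail_average (\<kappa> k)\<bar> / c) * indicator (tail (\<kappa> k)) \<omega>) \<partial>M)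
      = ennreal (\<Phi> (\<bar>tail_average (\<kappa> k)\<bar> / c)) * emeasure M (tail (\<kappa> k))"
    using nonneg
    by (subst nn_integral_cmult_indicator[symmetric]) (auto intro!: nn_integral_cong simp: indicator_def)
  also have "\<dots> = ennreal (\<Phi> (\<bar>tail_average (\<kappa> k)\<bar> / c) * measure M (tail (\<kappa> k)))"
    using nonneg by (simp add: emeasure_eq_measure ennreal_mult')
  also have "\<dots> \<le> ennreal ((1/2)^Suc k)"
    using tail_average_jensen[of "real (\<kappa> k)"] cutoff_tail[of k] cutoff_gt[of k]
    by (intro ennreal_leI) simp
  finally show ?thesis .
qed

lemma modular_tail_envelope_le_1: "(\<integral>\<^sup>+\<omega>. ennreal (\<Phi> (tail_envelope \<omega> / c)) \<partial>M) \<le> 1"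
proof -
  let ?h = "\<lambda>k \<omega>. ennreal (\<Phi> (\<bar>tail_average (\<kappa> k)\<bar> / c) * indicator (tail (\<kappa> k)) \<omega>)"
  have "(\<integral>\<^sup>+\<omega>. ennreal (\<Phi> (tail_envelope \<omega> / c)) \<partial>M) \<le> (\<integral>\<^sup>+\<omega>. (\<Sum>k. ?h k \<omega>) \<partial>M)"
    by (intro nn_integral_mono tail_envelope_modular_le_suminf)
  also have "\<dots> = (\<Sum>k. \<integral>\<^sup>+\<omega>. ?h k \<omega> \<partial>M)"
    by (intro nn_integral_suminf) measurable
  also have "\<dots> \<le> (\<Sum>k. ennreal ((1/2)^Suc k))"
    by (intro suminf_le nn_integral_tail_term_le summableI)
  also have "\<dots> = ennreal (\<Sum>k. (1/2::real)^Suc k)"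
    by (rule suminf_ennreal2) (auto intro: sums_summable[OF power_half_series])
  also have "\<dots> = 1"
    using sums_unique[OF power_half_series] by simp
  finally show ?thesis .
qed

lemma in_orlicz_tail_envelope: "in_orlicz M \<Phi> tail_envelope"
  unfolding in_orlicz_def
  using modular_tail_envelope_le_1 c_pos tail_envelope_nonneg by (auto simp: abs_of_nonneg)

lemma cell_average_dominated:
  assumes "\<omega> \<in> space M" "measure M (cell n \<omega>) > 0"
  shows "\<bar>cell_average n \<omega>\<bar> \<le> \<bar>X \<omega>\<bar> + 1 + tail_envelope \<omega>"
proof (cases "\<bar>X \<omega>\<bar> < real (\<kappa> n)")
  case True
  have "(1/2::real)^n \<le> 1" by (simp add: power_le_one)
  then show ?thesis
    using cell_average_close[OF assms(2) True] tail_envelope_nonneg[of \<omega>] by linarith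
next
  case False
  then have "\<omega> \<in> tail (real (\<kappa> n))" using assms(1) by (simp add: tail_def)
  moreover have "cell_average n \<omega> = tail_average (\<kappa> n)"
    using cell_tail[OF assms(1)] False by (simp add: cell_average_def tail_average_def)
  ultimately show ?thesis
    using tail_average_le_envelope[of \<omega> n] by simp
qed

lemma cell_average_tendsto:
  assumes "\<And>n. measure M (cell n \<omega>) > 0"
  shows "(\<lambda>n. cell_average n \<omega>) \<longlonglongrightarrow> X \<omega>"
proof -
  have "eventually (\<lambda>n. norm (cell_average n \<omega> - X \<omega>) \<le> (1/2)^n) sequentially"
  proof (rule eventually_sequentiallyI[of "nat \<lceil>\<bar>X \<omega>\<bar>\<rceil>"])
    fix n assume "nat \<lceil>\<bar>X \<omega>\<bar>\<rceil> \<le> n"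
    then have "\<bar>X \<omega>\<bar> < real (\<kappa> n)" using cutoff_gt[of n] by linarith
    then show "norm (cell_average n \<omega> - X \<omega>) \<le> (1/2)^n"
      using cell_average_close[OF assms] by simp
  qed
  moreover have "(\<lambda>n. (1/2::real)^n) \<longlonglongrightarrow> 0" by (rule LIMSEQ_power_zero) simp
  ultimately have "(\<lambda>n. cell_average n \<omega> - X \<omega>) \<longlonglongrightarrow> 0" by (rule Lim_null_comparison)
  then show ?thesis by (simp add: LIM_zero_iff)
qed

theorem cond_exp_part_order_convergent:
  "\<exists>\<pi> :: nat \<Rightarrow> 'a set set. (\<forall>n. \<pi> n \<in> fin_partitions M) \<and>
     (AE \<omega> in M. (\<lambda>n. cond_exp_part M (\<pi> n) X \<omega>) \<longlonglongrightarrow> X \<omega>) \<and>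
     (\<exists>Z. in_orlicz M \<Phi> Z \<and> (\<forall>n. AE \<omega> in M. \<bar>cond_exp_part M (\<pi> n) X \<omega>\<bar> \<le> Z \<omega>))"
proof -
  have "\<forall>n. \<exists>P\<in>fin_partitions M. AE \<omega> in M.
      measure M (cell n \<omega>) > 0 \<and> cond_exp_part M P X \<omega> = cell_average n \<omega>"
    using cond_exp_part_of_level_sets[OF finite_quantizer_range quantizer_level_sets integrable_X]
    by (simp add: cell_def cell_average_def)
  then obtain \<pi> where \<pi>: "\<And>n. \<pi> n \<in> fin_partitions M"
    and cells: "\<And>n. AE \<omega> in M. measure M (cell n \<omega>) > 0 \<and> cond_exp_part M (\<pi> n) X \<omega> = cell_average n \<omega>"
    by metis
  define Z where "Z \<omega> = \<bar>X \<omega>\<bar> + 1 + tail_envelope \<omega>" for \<omega>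
  have "in_orlicz M \<Phi> (\<lambda>\<omega>. \<bar>X \<omega>\<bar>)" using in_orlicz_X by (simp add: in_orlicz_def)
  then have "in_orlicz M \<Phi> Z"
    unfolding Z_def
    by (intro in_orlicz_add[OF orlicz] in_orlicz_const[OF orlicz] in_orlicz_tail_envelope)
  moreover have "AE \<omega> in M. \<bar>cond_exp_part M (\<pi> n) X \<omega>\<bar> \<le> Z \<omega>" for n
    using cells[of n] AE_space
    by eventually_elim (simp add: Z_def cell_average_dominated)
  moreover have "AE \<omega> in M. \<forall>n. measure M (cell n \<omega>) > 0 \<and> cond_exp_part M (\<pi> n) X \<omega> = cell_average n \<omega>"
    using cells by (simp add: AE_all_countable)
  then have "AE \<omega> in M. (\<lambda>n. cond_exp_part M (\<pi> n) X \<omega>) \<longlonglongrightarrow> X \<omega>"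
  proof eventually_elim
    case (elim \<omega>)
    then show ?case using cell_average_tendsto[of \<omega>] by simp
  qed
  ultimately show ?thesis using \<pi> by blast
qed

end

theorem proposition3p4:
  fixes M :: "'a measure" and \<Phi> :: "real \<Rightarrow> real" and X :: "'a \<Rightarrow> real"
  assumes "prob_space M" and "nonatomic M" and "orlicz_function \<Phi>"
    and "in_orlicz M \<Phi> X"
  shows "\<exists>\<pi> :: nat \<Rightarrow> 'a set set. (\<forall>n. \<pi> n \<in> fin_partitions M) \<and>
           (AE \<omega> in M. (\<lambda>n. cond_exp_part M (\<pi> n) X \<omega>) \<longlonglongrightarrow> X \<omega>) \<and>
           (\<exists>Z. in_orlicz M \<Phi> Z \<and>
                (\<forall>n. AE \<omega> in M. \<bar>cond_exp_part M (\<pi> n) X \<omega>\<bar> \<le> Z \<omega>))"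
proof -
  obtain c where "X \<in> borel_measurable M" "c > 0"
    "(\<integral>\<^sup>+\<omega>. ennreal (\<Phi> (\<bar>X \<omega>\<bar> / c)) \<partial>M) \<le> 1"
    using \<open>in_orlicz M \<Phi> X\<close> unfolding in_orlicz_def by blast
  then interpret orlicz_variable M \<Phi> X c
    using \<open>prob_space M\<close> \<open>orlicz_function \<Phi>\<close> by (simp add: orlicz_variable_def orlicz_variable_axioms_def)
  obtain \<kappa> where "\<And>n. n < \<kappa> n"
    "\<And>n. (\<integral>x\<in>tail (real (\<kappa> n)). \<Phi> (\<bar>X x\<bar> / c) \<partial>M) \<le> (1/2)^Suc n"
    using exists_cutoffs by metis
  then interpret orlicz_variable_cutoffs M \<Phi> X c \<kappa>
    by unfold_locales
  show ?thesis by (rule cond_exp_part_order_convergent)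
qed

end
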